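(* Let $n\ge4$, let $C=\mathrm{circ}(1,0,\ldots,0,-1)$ of order $n-1$, and let $X=(CC^T+I_{n-1})^{-1}(J_{n-1}-nI_{n-1})$. Then $X=\mathrm{circ}(b_0,b_1,\ldots,b_{n-2})$ where, for $j=0,1,\ldots,n-2$, \[b_j=1+\frac{n2^{n-1-j}}{\sqrt{5}}\left[\frac{(3+\sqrt{5})^j}{2^{n-1}-(3+\sqrt{5})^{n-1}}-\frac{(3-\sqrt{5})^j}{2^{n-1}-(3-\sqrt{5})^{n-1}}\right].\]
   Context: For $c_0,\dots,c_{k-1}$, $\mathrm{circ}(c_0,\ldots,c_{k-1})$ denotes the $k\times k$ circulant matrix whose $(i,j)$-entry is $c_{(j-i)\bmod k}$. $J_{n-1}$ is the $(n-1)\times(n-1)$ all-ones matrix and $I_{n-1}$ the identity. Note $CC^T+I_{n-1}=\mathrm{circ}(3,-1,0,\ldots,0,-1)$, which is invertible. ($X$ is a block of the Moore–Penrose inverse of the oriented incidence matrix of the wheel graph $W_n$.) *)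

theory Defs
  imports "Jordan_Normal_Form.Matrix" Complex_Main
begin

definition circ :: "(nat \<Rightarrow> real) \<Rightarrow> nat \<Rightarrow> real mat" where
  "circ c k = mat k k (\<lambda>(i,j). c ((j + k - i) mod k))"

definition J_mat :: "nat \<Rightarrow> real mat" where
  "J_mat k = mat k k (\<lambda>_. 1)"

definition mat_inv :: "real mat \<Rightarrow> real mat" where
  "mat_inv A = (THE B. B \<in> carrier_mat (dim_row A) (dim_row A) \<and>
      A * B = 1\<^sub>m (dim_row A) \<and> B * A = 1\<^sub>m (dim_row A))"

end

theory Submission
  imports Defs "Jordan_Normal_Form.Determinant"
begin

(* Write m = n - 1. The matrix C C^T + I is the circulant circ(3, -1, 0, ..., 0, -1), so
   (C C^T + I) circ(b) is the circulant of the cyclic second difference 3 b_k - b_(k-1) - b_(k+1).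
   With A, B = (3 + sqrt 5)/2, (3 - sqrt 5)/2 the roots of x^2 = 3x - 1, one has
   b_k = 1 + n/sqrt 5 (g_A(k) - g_B(k)) where g_x(k) = x^k / (1 - x^m). Thanks to the normalisation
   1/(1 - x^m) the sequence g_x satisfies the cyclic recurrence except at k = 0 and k = m - 1;
   the defects at k = m - 1 cancel in g_A - g_B, and the one at k = 0 is B - A = -sqrt 5.
   Hence (C C^T + I) circ(b) = J - n I, which is invertible with inverse -(J + I)/n, and so X = circ(b). *)

lemma circ_carrier_mat [simp]: "circ c m \<in> carrier_mat m m"
  by (simp add: circ_def)

lemma dim_circ [simp]: "dim_row (circ c m) = m" "dim_col (circ c m) = m"
  by (simp_all add: circ_def)

lemma index_circ [simp]: "i < m \<Longrightarrow> j < m \<Longrightarrow> circ c m $$ (i, j) = c ((j + m - i) mod m)"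
  by (simp add: circ_def)

lemma circ_cong: "(\<And>k. k < m \<Longrightarrow> c k = d k) \<Longrightarrow> circ c m = circ d m"
  by (rule eq_matI) auto

lemma circ_add: "circ c m + circ d m = circ (\<lambda>k. c k + d k) m"
  by (rule eq_matI) auto

lemma one_mat_circ: "1\<^sub>m m = circ (\<lambda>k. if k = 0 then 1 else 0) m"
  by (rule eq_matI) (auto simp: mod_if)

lemma J_minus_smult_one_mat_circ: "J_mat m - x \<cdot>\<^sub>m 1\<^sub>m m = circ (\<lambda>k. if k = 0 then 1 - x else 1) m"
  by (rule eq_matI) (auto simp: J_mat_def mod_if)

lemma int_circ_index: "i \<le> m \<Longrightarrow> int ((j + m - i) mod m) = (int j - int i) mod int m"
  by (simp add: zmod_int diff_add_eq[symmetric])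

lemma transpose_circ: "(circ c m)\<^sup>T = circ (\<lambda>k. c ((m - k) mod m)) m"
proof (rule eq_matI)
  fix i j assume "i < dim_row (circ (\<lambda>k. c ((m - k) mod m)) m)" "j < dim_col (circ (\<lambda>k. c ((m - k) mod m)) m)"
  then have i: "i < m" and j: "j < m" by auto
  have "int ((m - (j + m - i) mod m) mod m) = int ((0 + m - (j + m - i) mod m) mod m)" by simp
  also have "\<dots> = (- int ((j + m - i) mod m)) mod m"
    using i by (subst int_circ_index) auto
  also have "\<dots> = int ((i + m - j) mod m)"
    using i j by (simp add: int_circ_index mod_minus_eq)
  finally show "(circ c m)\<^sup>T $$ (i, j) = circ (\<lambda>k. c ((m - k) mod m)) m $$ (i, j)"
    using i j by simp
qed auto

definition circ_conv :: "nat \<Rightarrow> (nat \<Rightarrow> real) \<Rightarrow> (nat \<Rightarrow> real) \<Rightarrow> nat \<Rightarrow> real" where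
  "circ_conv m c d k = (\<Sum>l<m. c l * d ((k + m - l) mod m))"

lemma circ_mult_circ: "circ c m * circ d m = circ (circ_conv m c d) m"
proof (rule eq_matI)
  fix i j assume "i < dim_row (circ (circ_conv m c d) m)" "j < dim_col (circ (circ_conv m c d) m)"
  then have i: "i < m" and j: "j < m" by auto
  have "(circ c m * circ d m) $$ (i, j) = (\<Sum>l<m. c ((l + m - i) mod m) * d ((j + m - l) mod m))"
    using i j by (simp add: scalar_prod_def lessThan_atLeast0)
  also have "\<dots> = (\<Sum>t<m. c t * d (((j + m - i) mod m + m - t) mod m))"
  proof (rule sum.reindex_bij_witness[where i = "\<lambda>t. (t + i) mod m" and j = "\<lambda>l. (l + m - i) mod m"])
    fix l assume l: "l \<in> {..<m}"
    have "int (((l + m - i) mod m + i) mod m) = int l"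
      using i l by (simp add: int_circ_index zmod_int[symmetric] mod_add_left_eq)
    then show "((l + m - i) mod m + i) mod m = l" by simp
    show "(l + m - i) mod m \<in> {..<m}" using i by simp
    have "int (((j + m - i) mod m + m - (l + m - i) mod m) mod m)
        = (int ((j + m - i) mod m) - int ((l + m - i) mod m)) mod m"
      using i by (intro int_circ_index) simp
    also have "\<dots> = int ((j + m - l) mod m)"
      using i j l by (simp add: int_circ_index mod_diff_eq)
    finally show "c ((l + m - i) mod m) * d (((j + m - i) mod m + m - (l + m - i) mod m) mod m)
        = c ((l + m - i) mod m) * d ((j + m - l) mod m)" by simp
  next
    fix t assume t: "t \<in> {..<m}"
    have "int (((t + i) mod m + m - i) mod m) = (int ((t + i) mod m) - int i) mod int m"
      using i by (intro int_circ_index) simp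
    also have "\<dots> = int t"
      using t by (simp add: zmod_int mod_diff_left_eq)
    finally show "((t + i) mod m + m - i) mod m = t" by simp
    show "(t + i) mod m \<in> {..<m}" using i by simp
  qed
  finally show "(circ c m * circ d m) $$ (i, j) = circ (circ_conv m c d) m $$ (i, j)"
    using i j by (simp add: circ_conv_def)
qed auto

lemma circ_conv_eq_sum_support:
  assumes "S \<subseteq> {..<m}" and "\<And>l. l < m \<Longrightarrow> l \<notin> S \<Longrightarrow> c l = 0"
  shows "circ_conv m c d k = (\<Sum>l\<in>S. c l * d ((k + m - l) mod m))"
  unfolding circ_conv_def using assms by (intro sum.mono_neutral_right) auto

definition cyclic_stencil :: "nat \<Rightarrow> real \<Rightarrow> real \<Rightarrow> nat \<Rightarrow> real" where
  "cyclic_stencil m \<alpha> \<beta> k = (if k = 0 then \<alpha> else if k = 1 \<or> k = m - 1 then \<beta> else 0)"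

lemma circ_stencil_mult_circ:
  assumes "m \<ge> 3"
  shows "circ (cyclic_stencil m \<alpha> \<beta>) m * circ d m
    = circ (\<lambda>k. \<alpha> * d k + \<beta> * (d ((k + m - 1) mod m) + d ((k + 1) mod m))) m"
  unfolding circ_mult_circ
proof (rule circ_cong)
  fix k assume k: "k < m"
  have "circ_conv m (cyclic_stencil m \<alpha> \<beta>) d k
      = (\<Sum>l\<in>{0, 1, m - 1}. cyclic_stencil m \<alpha> \<beta> l * d ((k + m - l) mod m))"
    using assms by (intro circ_conv_eq_sum_support) (auto simp: cyclic_stencil_def)
  also have "\<dots> = \<alpha> * d k + \<beta> * (d ((k + m - 1) mod m) + d ((k + 1) mod m))"
    using assms k by (simp add: cyclic_stencil_def algebra_simps)
  finally show "circ_conv m (cyclic_stencil m \<alpha> \<beta>) d k = \<dots>" .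
qed

lemma circ_stencil_add_one_mat:
  "circ (cyclic_stencil m \<alpha> \<beta>) m + 1\<^sub>m m = circ (cyclic_stencil m (\<alpha> + 1) \<beta>) m"
  unfolding one_mat_circ circ_add by (rule circ_cong) (simp add: cyclic_stencil_def)

lemma cycle_incidence_mult_transpose:
  assumes "m \<ge> 3"
  defines "C \<equiv> circ (\<lambda>j. if j = 0 then 1 else if j = m - 1 then -1 else 0) m"
  shows "C * C\<^sup>T = circ (cyclic_stencil m 2 (-1)) m"
  unfolding C_def transpose_circ circ_mult_circ
proof (rule circ_cong)
  fix k assume k: "k < m"
  let ?c = "\<lambda>j::nat. if j = 0 then 1 else if j = m - 1 then -1 else (0::real)"
  have "circ_conv m ?c (\<lambda>k. ?c ((m - k) mod m)) k
      = (\<Sum>l\<in>{0, m - 1}. ?c l * ?c ((m - (k + m - l) mod m) mod m))"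
    using assms by (intro circ_conv_eq_sum_support) auto
  also have "\<dots> = cyclic_stencil m 2 (-1) k"
    using assms k by (auto simp: cyclic_stencil_def mod_if)
  finally show "circ_conv m ?c (\<lambda>k. ?c ((m - k) mod m)) k = cyclic_stencil m 2 (-1) k" .
qed

lemma mat_inv_eqI:
  assumes A: "A \<in> carrier_mat m m" and B: "B \<in> carrier_mat m m" and AB: "A * B = 1\<^sub>m m"
  shows "mat_inv A = B"
  unfolding mat_inv_def
proof (rule the_equality)
  show "B \<in> carrier_mat (dim_row A) (dim_row A) \<and> A * B = 1\<^sub>m (dim_row A) \<and> B * A = 1\<^sub>m (dim_row A)"
    using A B AB mat_mult_left_right_inverse[OF A B AB] by simp
next
  fix B' assume "B' \<in> carrier_mat (dim_row A) (dim_row A) \<and> A * B' = 1\<^sub>m (dim_row A) \<and> B' * A = 1\<^sub>m (dim_row A)"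
  then have B': "B' \<in> carrier_mat m m" and B'A: "B' * A = 1\<^sub>m m" using A by auto
  have "B' = B' * (A * B)" using B' by (simp add: AB)
  also have "\<dots> = (B' * A) * B" by (rule assoc_mult_mat[OF B' A B, symmetric])
  also have "\<dots> = B" using B by (simp add: B'A)
  finally show "B' = B" .
qed

lemma mat_inv_mult_eq:
  assumes A: "A \<in> carrier_mat m m" and B: "B \<in> carrier_mat m m"
    and T: "T \<in> carrier_mat m m" and K: "K \<in> carrier_mat m m"
    and AB: "A * B = T" and TK: "T * K = 1\<^sub>m m"
  shows "mat_inv A * T = B"
proof -
  have "A * (B * K) = 1\<^sub>m m"
    using A B K by (simp add: assoc_mult_mat[symmetric] AB TK)
  then have "mat_inv A = B * K"
    using A B K by (intro mat_inv_eqI) auto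
  then have "mat_inv A * T = B * (K * T)"
    using B K T by (simp add: assoc_mult_mat)
  also have "K * T = 1\<^sub>m m"
    by (rule mat_mult_left_right_inverse[OF T K TK])
  finally show ?thesis
    using B by simp
qed

lemma J_minus_smult_one_mat_mult:
  assumes "x + y = real m"
  shows "(J_mat m - x \<cdot>\<^sub>m 1\<^sub>m m) * (J_mat m - y \<cdot>\<^sub>m 1\<^sub>m m) = (x * y) \<cdot>\<^sub>m 1\<^sub>m m"
proof (rule eq_matI)
  fix i j assume "i < dim_row ((x * y) \<cdot>\<^sub>m 1\<^sub>m m)" "j < dim_col ((x * y) \<cdot>\<^sub>m 1\<^sub>m m)"
  then have i: "i < m" and j: "j < m" by auto
  have "(\<Sum>l<m. (1 - x * of_bool (i = l)) * (1 - y * of_bool (l = j)))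
      = (\<Sum>l<m. 1 - x * of_bool (i = l) - y * of_bool (l = j) + x * y * of_bool (i = j) * of_bool (l = j))"
    by (intro sum.cong) (auto simp: algebra_simps)
  also have "\<dots> = x * y * of_bool (i = j)"
    using i j assms by (simp add: sum.distrib sum_subtractf sum_distrib_left[symmetric])
  finally show "((J_mat m - x \<cdot>\<^sub>m 1\<^sub>m m) * (J_mat m - y \<cdot>\<^sub>m 1\<^sub>m m)) $$ (i, j) = ((x * y) \<cdot>\<^sub>m 1\<^sub>m m) $$ (i, j)"
    using i j by (simp add: J_mat_def scalar_prod_def lessThan_atLeast0 of_bool_def)
qed (auto simp: J_mat_def)

lemma J_minus_smult_one_mat_inverse:
  assumes "x \<noteq> 0" and "x \<noteq> real m"
  shows "(J_mat m - x \<cdot>\<^sub>m 1\<^sub>m m) * ((1 / (x * (real m - x))) \<cdot>\<^sub>m (J_mat m - (real m - x) \<cdot>\<^sub>m 1\<^sub>m m)) = 1\<^sub>m m"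
    (is "?T * (?c \<cdot>\<^sub>m ?K) = _")
proof -
  have "?T * (?c \<cdot>\<^sub>m ?K) = ?c \<cdot>\<^sub>m (?T * ?K)"
    unfolding J_minus_smult_one_mat_circ by (intro mult_smult_distrib) auto
  also have "\<dots> = ?c \<cdot>\<^sub>m ((x * (real m - x)) \<cdot>\<^sub>m 1\<^sub>m m)"
    by (subst J_minus_smult_one_mat_mult) simp_all
  also have "\<dots> = 1\<^sub>m m"
    using assms by (intro eq_matI) auto
  finally show ?thesis .
qed

lemma cyclic_geometric_recurrence:
  fixes x s :: real
  assumes root: "x * x = s * x - 1" and "x ^ m \<noteq> 1" and "3 \<le> m" and "k < m"
  defines "g \<equiv> \<lambda>j. x ^ j / (1 - x ^ m)"
  shows "s * g k - (g ((k + m - 1) mod m) + g ((k + 1) mod m))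
    = (if k = 0 then s - x else if k = m - 1 then -1 else 0)"
proof -
  have step: "x ^ (j + 2) = s * x ^ (j + 1) - x ^ j" for j
  proof -
    have "x ^ (j + 2) = x ^ j * (x * x)" by (simp add: power_add power2_eq_square)
    then show ?thesis using root by (simp add: algebra_simps)
  qed
  have denom: "1 - x ^ m \<noteq> 0" using assms(2) by simp
  have quotient: "s * g k - (g p + g q) = (s * x ^ k - x ^ p - x ^ q) / (1 - x ^ m)" for p q
    by (simp add: g_def diff_divide_distrib)
  obtain j where m: "m = j + 3" using \<open>3 \<le> m\<close> by (metis add.commute le_Suc_ex)
  have "k = 0 \<or> k = m - 1 \<or> k = (k - 1) + 1 \<and> (k - 1) + 2 < m"
    using \<open>k < m\<close> by arith
  then consider "k = 0" | "k = m - 1" | i where "k = i + 1" "i + 2 < m"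
    by blast
  then show ?thesis
  proof cases
    case 1
    have "(k + m - 1) mod m = j + 2" "(k + 1) mod m = 1"
      using 1 m by simp_all
    moreover have "s * x ^ k - x ^ (j + 2) - x ^ 1 = (s - x) * (1 - x ^ m)"
      using 1 step[of "j + 2"] by (simp add: m algebra_simps power_add eval_nat_numeral)
    ultimately have "s * g k - (g ((k + m - 1) mod m) + g ((k + 1) mod m)) = s - x"
      using denom by (simp add: quotient)
    with 1 show ?thesis by simp
  next
    case 2
    have "(k + m - 1) mod m = j + 1" "(k + 1) mod m = 0"
      using 2 m by (simp_all add: le_mod_geq)
    moreover have "s * x ^ k - x ^ (j + 1) - x ^ 0 = - (1 - x ^ m)"
      using 2 step[of "j + 1"] by (simp add: m algebra_simps power_add eval_nat_numeral)
    ultimately have "s * g k - (g ((k + m - 1) mod m) + g ((k + 1) mod m)) = -1"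
      using denom by (simp add: quotient field_simps)
    with 2 m show ?thesis by simp
  next
    case 3
    have "(k + m - 1) mod m = i" "(k + 1) mod m = i + 2"
      using 3 by simp_all
    moreover have "s * x ^ k - x ^ i - x ^ (i + 2) = 0"
      using 3 step[of i] by simp
    ultimately have "s * g k - (g ((k + m - 1) mod m) + g ((k + 1) mod m)) = 0"
      by (simp add: quotient)
    with 3 show ?thesis by simp
  qed
qed

lemma wheel_coefficients_recurrence:
  fixes n k :: nat
  assumes "4 \<le> n" and "k < n - 1"
  defines "b \<equiv> (\<lambda>j::nat. 1 + real n * 2 ^ (n - 1 - j) / sqrt 5 *
      ((3 + sqrt 5) ^ j / (2 ^ (n - 1) - (3 + sqrt 5) ^ (n - 1))
     - (3 - sqrt 5) ^ j / (2 ^ (n - 1) - (3 - sqrt 5) ^ (n - 1))))"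
  shows "3 * b k - (b ((k + (n - 1) - 1) mod (n - 1)) + b ((k + 1) mod (n - 1)))
    = (if k = 0 then 1 - real n else 1)"
proof -
  define m where "m = n - 1"
  have m: "3 \<le> m" "k < m" using assms(1,2) by (simp_all add: m_def)
  define A B :: real where "A = (3 + sqrt 5) / 2" and "B = (3 - sqrt 5) / 2"
  define g where "g x j = x ^ j / (1 - x ^ m)" for x :: real and j
  have sqrt5: "sqrt 5 * sqrt 5 = (5::real)" "2 < sqrt (5::real)" "sqrt (5::real) < 3"
    by (simp_all add: real_less_rsqrt real_less_lsqrt)
  have roots: "A * A = 3 * A - 1" "B * B = 3 * B - 1" "A - B = sqrt 5"
    unfolding A_def B_def using sqrt5(1) by (simp_all add: field_simps)
  have "1 < A ^ m" using sqrt5 m by (intro one_less_power) (auto simp: A_def)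
  moreover have "B ^ m < 1" using sqrt5 m by (intro power_less_one_iff[THEN iffD2]) (auto simp: B_def)
  ultimately have powers: "A ^ m \<noteq> 1" "B ^ m \<noteq> 1" by auto
  have rescale: "2 ^ (m - j) * ((2 * x) ^ j / (2 ^ m - (2 * x) ^ m)) = g x j" if "j \<le> m" for x j
  proof -
    have two_powers: "(2::real) ^ (m - j) * 2 ^ j = 2 ^ m" using that by (simp add: power_add[symmetric])
    have "2 ^ (m - j) * ((2 * x) ^ j / (2 ^ m - (2 * x) ^ m)) = (2 ^ (m - j) * 2 ^ j) * x ^ j / (2 ^ m * (1 - x ^ m))"
      by (simp add: algebra_simps)
    then show ?thesis unfolding two_powers by (simp add: g_def)
  qed
  define c where "c = real n / sqrt 5"
  have closed: "b j = 1 + c * (g A j - g B j)" if "j < m" for j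
  proof -
    have "3 + sqrt 5 = 2 * A" "3 - sqrt 5 = 2 * B" by (simp_all add: A_def B_def)
    then have "b j = 1 + c *
        (2 ^ (m - j) * ((2 * A) ^ j / (2 ^ m - (2 * A) ^ m)) - 2 ^ (m - j) * ((2 * B) ^ j / (2 ^ m - (2 * B) ^ m)))"
      unfolding b_def c_def m_def[symmetric] by (simp add: right_diff_distrib)
    then show ?thesis
      unfolding rescale[OF less_imp_le[OF that]] .
  qed
  let ?p = "(k + m - 1) mod m" and ?q = "(k + 1) mod m"
  have "?p < m" and "?q < m" using m by simp_all
  have recurrence: "3 * g x k - (g x ?p + g x ?q) = (if k = 0 then 3 - x else if k = m - 1 then -1 else 0)"
    if "x * x = 3 * x - 1" and "x ^ m \<noteq> 1" for x
    unfolding g_def by (rule cyclic_geometric_recurrence[OF that m])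
  have "3 * b k - (b ?p + b ?q)
      = 1 + c * ((3 * g A k - (g A ?p + g A ?q)) - (3 * g B k - (g B ?p + g B ?q)))"
    using m \<open>?p < m\<close> \<open>?q < m\<close> by (simp add: closed algebra_simps)
  also have "\<dots> = (if k = 0 then 1 - real n else 1)"
  proof -
    have "(3 - A) - (3 - B) = - sqrt 5"
      using roots(3) by simp
    then have "c * ((3 - A) - (3 - B)) = - real n"
      by (simp add: c_def)
    then show ?thesis
      unfolding recurrence[OF roots(1) powers(1)] recurrence[OF roots(2) powers(2)] by simp
  qed
  finally show ?thesis by (simp add: m_def)
qed

theorem mainTheorem8:
  fixes n :: nat
  assumes "n \<ge> 4"
  defines "C \<equiv> circ (\<lambda>j. if j = 0 then 1 else if j = n - 2 then -1 else 0) (n - 1)"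
  defines "X \<equiv> mat_inv (C * C\<^sup>T + 1\<^sub>m (n - 1)) * (J_mat (n - 1) - of_nat n \<cdot>\<^sub>m 1\<^sub>m (n - 1))"
  defines "b \<equiv> (\<lambda>j::nat. 1 + real n * 2 ^ (n - 1 - j) / sqrt 5 *
      ((3 + sqrt 5) ^ j / (2 ^ (n - 1) - (3 + sqrt 5) ^ (n - 1))
     - (3 - sqrt 5) ^ j / (2 ^ (n - 1) - (3 - sqrt 5) ^ (n - 1))))"
  shows "X = circ b (n - 1)"
proof -
  have m: "3 \<le> n - 1" using assms(1) by simp
  have n2: "n - 2 = n - 1 - 1" by simp
  have gram: "C * C\<^sup>T + 1\<^sub>m (n - 1) = circ (cyclic_stencil (n - 1) 3 (-1)) (n - 1)"
    unfolding C_def n2 cycle_incidence_mult_transpose[OF m] circ_stencil_add_one_mat by simp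
  have recurrence: "3 * b k - (b ((k + (n - 1) - 1) mod (n - 1)) + b ((k + 1) mod (n - 1)))
      = (if k = 0 then 1 - real n else 1)" if "k < n - 1" for k
    unfolding b_def by (rule wheel_coefficients_recurrence[OF assms(1) that])
  have "circ (cyclic_stencil (n - 1) 3 (-1)) (n - 1) * circ b (n - 1) = J_mat (n - 1) - real n \<cdot>\<^sub>m 1\<^sub>m (n - 1)"
    unfolding circ_stencil_mult_circ[OF m] J_minus_smult_one_mat_circ
    by (rule circ_cong) (use recurrence in force)
  moreover have "(J_mat (n - 1) - real n \<cdot>\<^sub>m 1\<^sub>m (n - 1))
      * ((1 / (real n * (real (n - 1) - real n))) \<cdot>\<^sub>m (J_mat (n - 1) - (real (n - 1) - real n) \<cdot>\<^sub>m 1\<^sub>m (n - 1)))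
      = 1\<^sub>m (n - 1)"
    using assms(1) by (intro J_minus_smult_one_mat_inverse) auto
  ultimately show ?thesis
    unfolding X_def gram
    by (intro mat_inv_mult_eq[where m = "n - 1"]) (auto simp: J_mat_def)
qed

end
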